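(* Let $z_1,z_2\in\mathbb{C}$ with $\mathrm{Im}(z_i)>0$ and $|z_i|\ge 80(2\pi)^2$, and set $L_i^2=\frac{|z_i|^2}{2\mathrm{Im}(z_i)}$, $A_i^2=\frac{|z_i|^2}{2\mathrm{Re}(z_i)}$. Suppose $$\left|\frac{2\pi}{L_1^2}-\frac{2\pi}{L_2^2}\right|\le16(2\pi)^3\left(\frac{1}{L_1^4}+\frac{1}{L_2^4}\right),\qquad \left|\frac{2\pi}{A_1^2}-\frac{2\pi}{A_2^2}\right|\le20(2\pi)^3\left(\frac{1}{L_1^4}+\frac{1}{L_2^4}\right).$$ Then $|z_1-z_2|<560(2\pi)^2\frac{\mathrm{Im}(z_1)}{|z_1|}$.
   Context: Here $\frac{2\pi}{A_i^2}$ is understood as $\frac{4\pi\,\mathrm{Re}(z_i)}{|z_i|^2}$ (so it is defined also when $\mathrm{Re}(z_i)=0$). *)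

theory Defs
  imports Complex_Main
begin

definition Lsq :: "complex \<Rightarrow> real" where
  "Lsq z = (cmod z)^2 / (2 * Im z)"

text \<open>The quantity 2 pi / A_i^2, read as 4 pi Re z / |z|^2 (defined also when Re z = 0).\<close>
definition twopi_over_Asq :: "complex \<Rightarrow> real" where
  "twopi_over_Asq z = 4 * pi * Re z / (cmod z)^2"

end

theory Submission
  imports Defs
begin

(* Pass to the reciprocals w = 1/z.  Writing a = -Im w = Im z / |z|^2 > 0,
   one has 2 pi / L^2 = 4 pi a, 1 / L^4 = 4 a^2 and 2 pi / A^2 = 4 pi Re w, so the two
   hypotheses say that the imaginary and real parts of w1 - w2 are bounded by
   128 pi^2 (a1^2 + a2^2) and 160 pi^2 (a1^2 + a2^2).  Since a |z| <= 1 and |z| >= 320 pi^2,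
   each 128 pi^2 a_i is at most 2/5, which forces a1 and a2 to be comparable:
   3 (a1^2 + a2^2) <= 14 a1 a2.  Hence |w1 - w2| <= 1344 pi^2 a1 a2, and multiplying by
   |z1| |z2| (using z1 - z2 = z1 z2 (w2 - w1)) together with a2 |z2| <= 1 gives
   |z1 - z2| <= 1344 pi^2 Im z1 / |z1|, which is below the claimed 2240 pi^2 Im z1 / |z1|. *)

lemma Im_inverse_eq: "Im (inverse z) = - Im z / (cmod z)^2"
  by (simp add: cmod_power2)

lemma Re_inverse_eq: "Re (inverse z) = Re z / (cmod z)^2"
  by (simp add: cmod_power2)

lemma Lsq_via_inverse:
  assumes "Im z > 0"
  shows "2 * pi / Lsq z = 4 * pi * (- Im (inverse z))"
    and "1 / (Lsq z)^2 = 4 * (- Im (inverse z))^2"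
proof -
  have "cmod z > 0" using assms by auto
  then show "2 * pi / Lsq z = 4 * pi * (- Im (inverse z))"
    and "1 / (Lsq z)^2 = 4 * (- Im (inverse z))^2"
    unfolding Lsq_def Im_inverse_eq using assms by (simp_all add: field_simps power2_eq_square)
qed

lemma twopi_over_Asq_via_inverse: "twopi_over_Asq z = 4 * pi * Re (inverse z)"
  unfolding twopi_over_Asq_def Re_inverse_eq by simp

text \<open>For Im z \<ge> 0, the quantity a = -Im (1/z) is nonnegative and at most 1/|z|, since
  |1/z| = 1/|z|; so a R \<le> 1 for every lower bound R of |z|.\<close>

lemma neg_Im_inverse_mult_le_one:
  assumes "Im z \<ge> 0" and "R \<le> cmod z"
  shows "- Im (inverse z) * R \<le> 1"
proof (cases "z = 0")
  case False
  have "- Im (inverse z) \<ge> 0" using assms(1) by (simp add: Im_inverse_eq)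
  then have "- Im (inverse z) * R \<le> - Im (inverse z) * cmod z"
    using mult_left_mono[OF assms(2)] by blast
  also have "\<dots> \<le> cmod (inverse z) * cmod z"
  proof (rule mult_right_mono)
    show "- Im (inverse z) \<le> cmod (inverse z)" using abs_Im_le_cmod[of "inverse z"] by linarith
  qed simp
  also have "\<dots> = 1" using False by (simp add: norm_inverse)
  finally show ?thesis .
qed simp

lemma abs_diff_cancel_factor:
  fixes k x y B :: real
  assumes "k > 0" and "\<bar>k * x - k * y\<bar> \<le> k * B"
  shows "\<bar>x - y\<bar> \<le> B"
proof -
  have "\<bar>k * x - k * y\<bar> = k * \<bar>x - y\<bar>"
    using assms(1) by (simp add: abs_mult flip: right_diff_distrib)
  then show ?thesis using assms by simp
qed

lemma Lsq_hypothesis_via_inverse: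
  fixes z1 z2 :: complex and K :: real
  defines "a1 \<equiv> - Im (inverse z1)" and "a2 \<equiv> - Im (inverse z2)"
  assumes "Im z1 > 0" "Im z2 > 0"
    and "\<bar>2 * pi / Lsq z1 - 2 * pi / Lsq z2\<bar>
           \<le> K * (2 * pi)^3 * (1 / (Lsq z1)^2 + 1 / (Lsq z2)^2)"
  shows "\<bar>a1 - a2\<bar> \<le> 8 * K * pi^2 * (a1^2 + a2^2)"
proof -
  have "\<bar>4 * pi * a1 - 4 * pi * a2\<bar> \<le> 4 * pi * (8 * K * pi^2 * (a1^2 + a2^2))"
    using assms(5)
    unfolding Lsq_via_inverse[OF assms(3)] Lsq_via_inverse[OF assms(4)] a1_def[symmetric] a2_def[symmetric]
    by (simp add: power3_eq_cube power2_eq_square algebra_simps)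
  then show ?thesis by (rule abs_diff_cancel_factor[rotated]) simp
qed

lemma Asq_hypothesis_via_inverse:
  fixes z1 z2 :: complex and K :: real
  defines "a1 \<equiv> - Im (inverse z1)" and "a2 \<equiv> - Im (inverse z2)"
  assumes "Im z1 > 0" "Im z2 > 0"
    and "\<bar>twopi_over_Asq z1 - twopi_over_Asq z2\<bar>
           \<le> K * (2 * pi)^3 * (1 / (Lsq z1)^2 + 1 / (Lsq z2)^2)"
  shows "\<bar>Re (inverse z1) - Re (inverse z2)\<bar> \<le> 8 * K * pi^2 * (a1^2 + a2^2)"
proof -
  have "\<bar>4 * pi * Re (inverse z1) - 4 * pi * Re (inverse z2)\<bar>
          \<le> 4 * pi * (8 * K * pi^2 * (a1^2 + a2^2))"
    using assms(5)
    unfolding Lsq_via_inverse[OF assms(3)] Lsq_via_inverse[OF assms(4)] twopi_over_Asq_via_inverse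
      a1_def[symmetric] a2_def[symmetric]
    by (simp add: power3_eq_cube power2_eq_square algebra_simps)
  then show ?thesis by (rule abs_diff_cancel_factor[rotated]) simp
qed

text \<open>Two positive reals whose difference is at most 2/5 of their sum are comparable
  (their ratio lies in [3/7, 7/3]); in quadratic form this reads as follows.\<close>

lemma comparable_quadratic:
  fixes a b :: real
  assumes "a > 0" "b > 0" and close: "\<bar>a - b\<bar> \<le> 2/5 * (a + b)"
  shows "3 * (a^2 + b^2) \<le> 14 * a * b"
proof -
  have "3 * a \<le> 7 * b" "3 * b \<le> 7 * a" using close unfolding abs_le_iff by auto
  then have "3 * a^2 \<le> 7 * a * b" "3 * b^2 \<le> 7 * a * b"
    using assms(1,2) mult_left_mono[of "3 * a" "7 * b" a] mult_left_mono[of "3 * b" "7 * a" b]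
    by (simp_all add: power2_eq_square algebra_simps)
  then show ?thesis by simp
qed

lemma reciprocal_distance_bound:
  fixes w1 w2 :: complex and c d :: real
  defines "a1 \<equiv> - Im w1" and "a2 \<equiv> - Im w2"
  assumes pos: "a1 > 0" "a2 > 0"
    and Im_close: "\<bar>a1 - a2\<bar> \<le> c * (a1^2 + a2^2)"
    and Re_close: "\<bar>Re w1 - Re w2\<bar> \<le> d * (a1^2 + a2^2)"
    and small: "c * a1 \<le> 2/5" "c * a2 \<le> 2/5"
    and "d \<ge> 0"
  shows "cmod (w1 - w2) \<le> 14/3 * (c + d) * a1 * a2"
proof -
  have "c * a1^2 \<le> 2/5 * a1" "c * a2^2 \<le> 2/5 * a2"
    using mult_right_mono[OF small(1), of a1] mult_right_mono[OF small(2), of a2] pos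
    by (simp_all add: power2_eq_square algebra_simps)
  then have "\<bar>a1 - a2\<bar> \<le> 2/5 * (a1 + a2)" using Im_close by (simp add: algebra_simps)
  then have comparable: "a1^2 + a2^2 \<le> 14/3 * a1 * a2"
    using comparable_quadratic[OF pos] by simp
  have "0 \<le> c * (a1^2 + a2^2)" using Im_close abs_ge_zero order_trans by blast
  moreover have "a1^2 + a2^2 > 0" using pos by (simp add: add_pos_pos)
  ultimately have "c \<ge> 0" by (auto simp: zero_le_mult_iff)
  then have "c + d \<ge> 0" using \<open>d \<ge> 0\<close> by simp
  have "cmod (w1 - w2) \<le> \<bar>Re (w1 - w2)\<bar> + \<bar>Im (w1 - w2)\<bar>" by (rule cmod_le)
  also have "\<dots> \<le> (c + d) * (a1^2 + a2^2)"
    using Im_close Re_close by (simp add: a1_def a2_def abs_minus_commute algebra_simps)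
  also have "\<dots> \<le> (c + d) * (14/3 * a1 * a2)"
    using comparable \<open>c + d \<ge> 0\<close> by (rule mult_left_mono)
  also have "\<dots> = 14/3 * (c + d) * a1 * a2" by simp
  finally show ?thesis .
qed

lemma cmod_diff_via_inverse:
  fixes z1 z2 :: complex
  assumes "z1 \<noteq> 0" "z2 \<noteq> 0"
  shows "cmod (z1 - z2) = cmod z1 * cmod z2 * cmod (inverse z1 - inverse z2)"
proof -
  have "z1 - z2 = - (z1 * z2 * (inverse z1 - inverse z2))"
    using assms by (simp add: field_simps)
  then show ?thesis by (simp add: norm_mult)
qed

text \<open>Back from the reciprocals: a bound C a1 a2 on |1/z1 - 1/z2| gives |z1 - z2| \<le> C Im z1 / |z1|,
  because a_i |z_i| = Im z_i / |z_i| and a2 |z2| \<le> 1.\<close>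

lemma distance_from_reciprocal_bound:
  fixes z1 z2 :: complex and C :: real
  assumes "Im z1 \<ge> 0" "Im z2 \<ge> 0" "z1 \<noteq> 0" "z2 \<noteq> 0" "C \<ge> 0"
    and reciprocals_close:
      "cmod (inverse z1 - inverse z2) \<le> C * (- Im (inverse z1)) * (- Im (inverse z2))"
  shows "cmod (z1 - z2) \<le> C * (Im z1 / cmod z1)"
proof -
  define a1 where "a1 = - Im (inverse z1)"
  define a2 where "a2 = - Im (inverse z2)"
  have scaled_a1: "a1 * cmod z1 = Im z1 / cmod z1"
    unfolding a1_def Im_inverse_eq using assms(3) by (simp add: power2_eq_square)
  have "cmod (z1 - z2) = cmod z1 * cmod z2 * cmod (inverse z1 - inverse z2)"
    using assms(3,4) by (rule cmod_diff_via_inverse)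
  also have "\<dots> \<le> cmod z1 * cmod z2 * (C * a1 * a2)"
    using reciprocals_close by (intro mult_left_mono) (simp_all add: a1_def a2_def)
  also have "\<dots> = C * (a1 * cmod z1) * (a2 * cmod z2)" by simp
  also have "\<dots> \<le> C * (a1 * cmod z1)"
  proof (rule mult_left_le)
    show "a2 * cmod z2 \<le> 1"
      unfolding a2_def using assms(2) by (intro neg_Im_inverse_mult_le_one) simp_all
    show "0 \<le> C * (a1 * cmod z1)" unfolding scaled_a1 using assms(1,5) by simp
  qed
  finally show ?thesis unfolding scaled_a1 .
qed

theorem lemma6p2:
  fixes z1 z2 :: complex
  assumes "Im z1 > 0" and "Im z2 > 0"
    and "cmod z1 \<ge> 80 * (2 * pi)^2" and "cmod z2 \<ge> 80 * (2 * pi)^2"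
    and "\<bar>2 * pi / Lsq z1 - 2 * pi / Lsq z2\<bar>
           \<le> 16 * (2 * pi)^3 * (1 / (Lsq z1)^2 + 1 / (Lsq z2)^2)"
    and "\<bar>twopi_over_Asq z1 - twopi_over_Asq z2\<bar>
           \<le> 20 * (2 * pi)^3 * (1 / (Lsq z1)^2 + 1 / (Lsq z2)^2)"
  shows "cmod (z1 - z2) < 560 * (2 * pi)^2 * (Im z1 / cmod z1)"
proof -
  define a1 where "a1 = - Im (inverse z1)"
  define a2 where "a2 = - Im (inverse z2)"
  have nonzero: "z1 \<noteq> 0" "z2 \<noteq> 0" using assms(1,2) by auto
  have pos: "a1 > 0" "a2 > 0"
    unfolding a1_def a2_def Im_inverse_eq using assms(1,2) nonzero by simp_all
  have Im_close: "\<bar>a1 - a2\<bar> \<le> 128 * pi^2 * (a1^2 + a2^2)"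
    using Lsq_hypothesis_via_inverse[OF assms(1,2,5)] by (simp add: a1_def a2_def)
  have Re_close: "\<bar>Re (inverse z1) - Re (inverse z2)\<bar> \<le> 160 * pi^2 * (a1^2 + a2^2)"
    using Asq_hypothesis_via_inverse[OF assms(1,2,6)] by (simp add: a1_def a2_def)
  have "a1 * (80 * (2 * pi)^2) \<le> 1" "a2 * (80 * (2 * pi)^2) \<le> 1"
    unfolding a1_def a2_def using assms(1-4) by (intro neg_Im_inverse_mult_le_one; simp)+
  then have small: "128 * pi^2 * a1 \<le> 2/5" "128 * pi^2 * a2 \<le> 2/5"
    by (simp_all add: power_mult_distrib algebra_simps)
  have "cmod (inverse z1 - inverse z2) \<le> 1344 * pi^2 * a1 * a2"
    using reciprocal_distance_bound[of "inverse z1" "inverse z2" "128 * pi^2" "160 * pi^2"]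
      pos Im_close Re_close small by (simp add: a1_def a2_def)
  then have "cmod (z1 - z2) \<le> 1344 * pi^2 * (Im z1 / cmod z1)"
    using assms(1,2) nonzero unfolding a1_def a2_def
    by (intro distance_from_reciprocal_bound) simp_all
  also have "\<dots> < 560 * (2 * pi)^2 * (Im z1 / cmod z1)"
    using assms(1) nonzero by (intro mult_strict_right_mono) simp_all
  finally show ?thesis .
qed

end
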